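(* Let $n\geq 7$ and $3\leq \Delta\leq n-2$ be integers, and let $T$ be a tree with $n$ vertices and maximum degree $\Delta$. (i) If $3\leq\Delta\leq\lfloor\frac{n-1}{2}\rfloor$, then $$SO(T)\geq \Delta\sqrt{\Delta^2+4}+\sqrt{8}\,(n-2\Delta-1)+\sqrt{5}\,\Delta,$$ with equality if and only if $T$ is isomorphic to a tree $T_\Delta$, i.e. a spider with exactly $\Delta$ legs, each leg of length at least $2$. (ii) If $\lfloor\frac{n-1}{2}\rfloor<\Delta\leq n-2$, then $$SO(T)\geq (n-\Delta-1)\sqrt{\Delta^2+4}+(2\Delta-n+1)\sqrt{\Delta^2+1}+\sqrt{5}\,(n-\Delta-1),$$ with equality if and only if $T\cong T_{n,\Delta}$, where $T_{n,\Delta}$ is the tree obtained from the star $K_{1,\Delta}$ (with $\Delta+1$ vertices) by attaching one pendant edge to each of $n-\Delta-1$ of its leaves.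
   Context: All graphs are finite, simple and undirected; $d_G(v)$ denotes the degree of a vertex $v$ in $G$. The Sombor index of a graph $G$ is $SO(G)=\sum_{uv\in E(G)}\sqrt{d_G(u)^2+d_G(v)^2}$. A spider is a tree with at most one vertex of degree greater than two; this vertex is the hub, and a leg is a path from the hub to a leaf; the length of a leg is its number of edges. *)

theory Defs
  imports Complex_Main
begin

definition simple_graph :: "'a set \<Rightarrow> 'a set set \<Rightarrow> bool" where
  "simple_graph V E \<longleftrightarrow> finite V \<and>
     (\<forall>e\<in>E. \<exists>u v. u \<in> V \<and> v \<in> V \<and> u \<noteq> v \<and> e = {u, v})"

definition degree :: "'a set set \<Rightarrow> 'a \<Rightarrow> nat" where
  "degree E v = card {e \<in> E. v \<in> e}"

definition max_degree :: "'a set \<Rightarrow> 'a set set \<Rightarrow> nat" where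
  "max_degree V E = Max (degree E ` V)"

definition is_path :: "'a set \<Rightarrow> 'a set set \<Rightarrow> 'a list \<Rightarrow> bool" where
  "is_path V E p \<longleftrightarrow> p \<noteq> [] \<and> distinct p \<and> set p \<subseteq> V \<and>
     (\<forall>i. Suc i < length p \<longrightarrow> {p ! i, p ! Suc i} \<in> E)"

definition connected_graph :: "'a set \<Rightarrow> 'a set set \<Rightarrow> bool" where
  "connected_graph V E \<longleftrightarrow>
     (\<forall>u\<in>V. \<forall>v\<in>V. \<exists>p. is_path V E p \<and> hd p = u \<and> last p = v)"

definition has_cycle :: "'a set \<Rightarrow> 'a set set \<Rightarrow> bool" where
  "has_cycle V E \<longleftrightarrow> (\<exists>p. is_path V E p \<and> length p \<ge> 3 \<and> {last p, hd p} \<in> E)"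

definition is_tree :: "'a set \<Rightarrow> 'a set set \<Rightarrow> bool" where
  "is_tree V E \<longleftrightarrow> simple_graph V E \<and> V \<noteq> {} \<and> connected_graph V E \<and> \<not> has_cycle V E"

definition sombor :: "'a set \<Rightarrow> 'a set set \<Rightarrow> real" where
  "sombor V E = (\<Sum>e\<in>E. sqrt (\<Sum>v\<in>e. (real (degree E v))\<^sup>2))"

definition spider :: "'a set \<Rightarrow> 'a set set \<Rightarrow> bool" where
  "spider V E \<longleftrightarrow> is_tree V E \<and> card {v \<in> V. degree E v > 2} \<le> 1"

text \<open>Legs at hub h: paths from h to a leaf (length of a leg = number of edges
  = length of the list minus one).\<close>
definition legs :: "'a set \<Rightarrow> 'a set set \<Rightarrow> 'a \<Rightarrow> 'a list set" where
  "legs V E h = {p. is_path V E p \<and> length p \<ge> 2 \<and> hd p = h \<and> degree E (last p) = 1}"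

definition spider_long_legs :: "'a set \<Rightarrow> 'a set set \<Rightarrow> nat \<Rightarrow> bool" where
  "spider_long_legs V E k \<longleftrightarrow> spider V E \<and>
     (\<exists>h\<in>V. degree E h > 2 \<and> card (legs V E h) = k \<and>
        (\<forall>p\<in>legs V E h. length p - 1 \<ge> 2))"

definition graph_iso :: "'a set \<Rightarrow> 'a set set \<Rightarrow> 'b set \<Rightarrow> 'b set set \<Rightarrow> bool" where
  "graph_iso V1 E1 V2 E2 \<longleftrightarrow> (\<exists>f. bij_betw f V1 V2 \<and>
     (\<forall>u\<in>V1. \<forall>v\<in>V1. {u, v} \<in> E1 \<longleftrightarrow> {f u, f v} \<in> E2))"

text \<open>T_{n,Delta}: star K_{1,Delta} with centre 0 and leaves 1..Delta, plus pendant
  vertices Delta+1..n-1, vertex i attached to leaf i-Delta.\<close>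
definition T_nD_V :: "nat \<Rightarrow> nat \<Rightarrow> nat set" where
  "T_nD_V n D = {..<n}"

definition T_nD_E :: "nat \<Rightarrow> nat \<Rightarrow> nat set set" where
  "T_nD_E n D = {{0, i} | i. 1 \<le> i \<and> i \<le> D} \<union> {{i - D, i} | i. D < i \<and> i < n}"

end

theory Submission
  imports Defs
begin

text \<open>
  Let h be a vertex of maximum degree D. The Sombor term of every edge is split into two shares,
  one credited to each end, so that SO(T) is the sum of the resulting vertex charges. The shares
  are chosen so that a vertex v other than h of degree 1 or 2 receives exactly
  2 sqrt 5 - 4 sqrt 2 + (3 sqrt 2 - sqrt 5) d(v), vertices of larger degree receive more, and the
  charge of h depends only on D and on the number L of pendant neighbours of h. Summing with the
  handshake lemma gives
    SO(T) = D sqrt (D^2 + 4) + sqrt 8 (n - 2D - 1) + sqrt 5 D + L eps(D) + (nonnegative excess)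
  with eps(D) = sqrt (D^2 + 1) - sqrt (D^2 + 4) + 2 sqrt 2 - sqrt 5 > 0.
  Part (i) follows from L >= 0; equality holds exactly when L = 0 and all other vertices have
  degree at most 2, i.e. when T is a spider whose D legs have length at least 2. For part (ii),
  sending each non-pendant neighbour of h to another one of its neighbours injects them into the
  n - 1 - D vertices at distance 2 from h, so L >= 2D + 1 - n. If equality holds, the injection is
  a bijection, and counting edges shows that T is T_{n,D}.
\<close>

section \<open>Neighbourhoods in simple graphs\<close>

definition neighbours :: "'a set \<Rightarrow> 'a set set \<Rightarrow> 'a \<Rightarrow> 'a set" where
  "neighbours V E v = {u \<in> V. {v, u} \<in> E}"

lemma simple_graph_edgeE:
  assumes "simple_graph V E" "e \<in> E"
  obtains u v where "u \<in> V" "v \<in> V" "u \<noteq> v" "e = {u, v}"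
  using assms unfolding simple_graph_def by blast

lemma simple_graph_edgeD:
  assumes "simple_graph V E" "{a, b} \<in> E"
  shows "a \<in> V" "b \<in> V" "a \<noteq> b"
  using simple_graph_edgeE[OF assms] by (auto simp: doubleton_eq_iff)

lemma simple_graph_no_loop: "simple_graph V E \<Longrightarrow> {a} \<notin> E"
  using simple_graph_edgeD[of V E a a] by auto

lemma simple_graph_finite:
  assumes "simple_graph V E"
  shows "finite V" "finite E"
proof -
  show fV: "finite V" using assms unfolding simple_graph_def by simp
  have "E \<subseteq> Pow V" using simple_graph_edgeE[OF assms] by blast
  then show "finite E" using fV by (simp add: finite_subset)
qed

lemma neighboursI:
  assumes "simple_graph V E" "{a, b} \<in> E"
  shows "b \<in> neighbours V E a"
  unfolding neighbours_def using simple_graph_edgeD[OF assms] assms(2) by blast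

lemma neighbours_edge: "u \<in> neighbours V E v \<Longrightarrow> {v, u} \<in> E \<and> {u, v} \<in> E"
  unfolding neighbours_def by (simp add: insert_commute)

lemma neighbours_subset:
  assumes "simple_graph V E"
  shows "neighbours V E v \<subseteq> V - {v}"
  unfolding neighbours_def using simple_graph_edgeD[OF assms] by blast

lemma finite_neighbours:
  assumes "simple_graph V E"
  shows "finite (neighbours V E v)"
  unfolding neighbours_def using simple_graph_finite[OF assms] by simp

lemma edges_at_eq_image_neighbours:
  assumes "simple_graph V E"
  shows "{e \<in> E. v \<in> e} = (\<lambda>u. {v, u}) ` neighbours V E v"
proof
  show "{e \<in> E. v \<in> e} \<subseteq> (\<lambda>u. {v, u}) ` neighbours V E v"
  proof
    fix e assume e: "e \<in> {e \<in> E. v \<in> e}"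
    then obtain a b where "a \<in> V" "b \<in> V" "e = {a, b}"
      using simple_graph_edgeE[OF assms] by blast
    with e show "e \<in> (\<lambda>u. {v, u}) ` neighbours V E v"
      unfolding neighbours_def by (auto simp: insert_commute)
  qed
qed (auto simp: neighbours_def)

lemma degree_eq_card_neighbours:
  assumes "simple_graph V E"
  shows "degree E v = card (neighbours V E v)"
proof -
  have "inj_on (\<lambda>u. {v, u}) (neighbours V E v)"
    by (auto intro: inj_onI simp: doubleton_eq_iff)
  then show ?thesis
    unfolding degree_def edges_at_eq_image_neighbours[OF assms] by (rule card_image)
qed

lemma degree_less_card:
  assumes s: "simple_graph V E" and v: "v \<in> V"
  shows "degree E v < card V"
proof -
  have fin: "finite V" by (rule simple_graph_finite(1)[OF s])
  have "degree E v \<le> card (V - {v})"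
    unfolding degree_eq_card_neighbours[OF s]
    using neighbours_subset[OF s] fin by (intro card_mono) auto
  also have "\<dots> < card V" using fin v by (rule card_Diff1_less)
  finally show ?thesis .
qed

lemma degree_one_neighbours:
  assumes "simple_graph V E" "degree E v = 1" "u \<in> neighbours V E v"
  shows "neighbours V E v = {u}"
  using assms degree_eq_card_neighbours[OF assms(1)] by (metis card_1_singletonE singletonD)

lemma sum_edges_eq_sum_neighbours:
  assumes "simple_graph V E"
  shows "(\<Sum>e\<in>E. \<Sum>v\<in>e. H v e) = (\<Sum>v\<in>V. \<Sum>u\<in>neighbours V E v. H v {v, u})"
proof -
  have "{v \<in> V. v \<in> e} = e" if "e \<in> E" for e
    using simple_graph_edgeE[OF assms that] by blast
  then have "(\<Sum>e\<in>E. \<Sum>v\<in>e. H v e) = (\<Sum>e\<in>E. \<Sum>v\<in>{v\<in>V. v \<in> e}. H v e)"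
    by simp
  also have "\<dots> = (\<Sum>v\<in>V. \<Sum>e\<in>{e\<in>E. v \<in> e}. H v e)"
    using sum.swap_restrict[OF simple_graph_finite(2,1)[OF assms]] by simp
  also have "\<dots> = (\<Sum>v\<in>V. \<Sum>u\<in>neighbours V E v. H v {v, u})"
  proof (intro sum.cong refl)
    fix v
    have "inj_on (\<lambda>u. {v, u}) (neighbours V E v)"
      by (auto intro: inj_onI simp: doubleton_eq_iff)
    then show "(\<Sum>e\<in>{e\<in>E. v \<in> e}. H v e) = (\<Sum>u\<in>neighbours V E v. H v {v, u})"
      unfolding edges_at_eq_image_neighbours[OF assms] by (simp add: sum.reindex)
  qed
  finally show ?thesis .
qed

lemma sum_degree_eq_twice_card_edges:
  assumes "simple_graph V E"
  shows "(\<Sum>v\<in>V. degree E v) = 2 * card E"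
proof -
  have "(\<Sum>v\<in>e. 1::nat) = 2" if "e \<in> E" for e
    using simple_graph_edgeE[OF assms that] by (metis card_2_iff card_eq_sum)
  then have "2 * card E = (\<Sum>e\<in>E. \<Sum>v\<in>e. 1::nat)" by simp
  also have "\<dots> = (\<Sum>v\<in>V. degree E v)"
    unfolding sum_edges_eq_sum_neighbours[OF assms] degree_eq_card_neighbours[OF assms] by simp
  finally show ?thesis by simp
qed

lemma sum_edges_split_halves:
  fixes S :: "'a \<Rightarrow> 'a \<Rightarrow> 'b::comm_monoid_add"
  assumes "simple_graph V E"
    and "\<And>a b. {a, b} \<in> E \<Longrightarrow> S a b + S b a = w {a, b}"
  shows "(\<Sum>e\<in>E. w e) = (\<Sum>v\<in>V. \<Sum>u\<in>neighbours V E v. S v u)"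
proof -
  \<comment> \<open>\<open>THE u. e = {v, u}\<close> is the other end of the edge e at v\<close>
  define H where "H v e = S v (THE u. e = {v, u})" for v e
  have other: "(THE u'. {v, u} = {v, u'}) = u" for v u :: 'a
    by (rule the_equality) (auto simp: doubleton_eq_iff)
  have "w e = (\<Sum>v\<in>e. H v e)" if e: "e \<in> E" for e
  proof -
    obtain a b where ab: "a \<noteq> b" "e = {a, b}"
      using simple_graph_edgeE[OF assms(1) e] by blast
    have "{b, a} = {a, b}" by blast
    then have "(\<Sum>v\<in>e. H v e) = S a b + S b a"
      unfolding ab H_def using ab(1) other[of a b] other[of b a] by simp
    then show ?thesis using assms(2) e ab by simp
  qed
  then have "(\<Sum>e\<in>E. w e) = (\<Sum>e\<in>E. \<Sum>v\<in>e. H v e)" by simp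
  also have "\<dots> = (\<Sum>v\<in>V. \<Sum>u\<in>neighbours V E v. S v u)"
    unfolding sum_edges_eq_sum_neighbours[OF assms(1)] H_def other ..
  finally show ?thesis .
qed

section \<open>Paths and trees\<close>

lemma is_path_singleton [simp]: "is_path V E [a] \<longleftrightarrow> a \<in> V"
  unfolding is_path_def by simp

lemma is_path_Cons_Cons:
  "is_path V E (a # b # p) \<longleftrightarrow>
     a \<in> V \<and> a \<notin> set (b # p) \<and> {a, b} \<in> E \<and> is_path V E (b # p)"
  unfolding is_path_def by (auto simp: less_Suc_eq_0_disj)

lemma is_path_mono: "is_path V' E' p \<Longrightarrow> V' \<subseteq> V \<Longrightarrow> E' \<subseteq> E \<Longrightarrow> is_path V E p"
  unfolding is_path_def by blast

lemma has_cycle_mono: "has_cycle V' E' \<Longrightarrow> V' \<subseteq> V \<Longrightarrow> E' \<subseteq> E \<Longrightarrow> has_cycle V E"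
  unfolding has_cycle_def using is_path_mono by blast

lemma is_path_nth_in_vertices: "is_path V E p \<Longrightarrow> i < length p \<Longrightarrow> p ! i \<in> V"
  unfolding is_path_def by (meson nth_mem subsetD)

lemma is_path_nth_neighbours:
  assumes "is_path V E p" "Suc i < length p"
  shows "p ! Suc i \<in> neighbours V E (p ! i)" "p ! i \<in> neighbours V E (p ! Suc i)"
  using assms is_path_nth_in_vertices[OF assms(1)]
  unfolding is_path_def neighbours_def by (auto simp: insert_commute)

lemma is_path_length_le_card:
  assumes "is_path V E p" "finite V"
  shows "length p \<le> card V"
proof -
  have "length p = card (set p)" using assms(1) unfolding is_path_def by (simp add: distinct_card)
  also have "\<dots> \<le> card V" using assms unfolding is_path_def by (simp add: card_mono)
  finally show ?thesis .
qed

lemma is_path_append: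
  assumes p: "is_path V E p" and w: "w \<in> V" "w \<notin> set p" and e: "{last p, w} \<in> E"
  shows "is_path V E (p @ [w])"
  unfolding is_path_def
proof (intro conjI allI impI)
  show "distinct (p @ [w])" "set (p @ [w]) \<subseteq> V" using p w unfolding is_path_def by auto
  fix i assume i: "Suc i < length (p @ [w])"
  show "{(p @ [w]) ! i, (p @ [w]) ! Suc i} \<in> E"
  proof (cases "Suc i < length p")
    case True then show ?thesis using p unfolding is_path_def by (simp add: nth_append)
  next
    case False
    then have "i = length p - 1" "p \<noteq> []" using i p unfolding is_path_def by auto
    then show ?thesis using e False by (simp add: nth_append last_conv_nth)
  qed
qed simp

lemma is_path_drop:
  assumes p: "is_path V E p" and j: "j < length p"
  shows "is_path V E (drop j p)"
  unfolding is_path_def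
proof (intro conjI allI impI)
  show "drop j p \<noteq> []" "distinct (drop j p)" using p j unfolding is_path_def by simp_all
  show "set (drop j p) \<subseteq> V" using p set_drop_subset[of j p] unfolding is_path_def by blast
  fix i assume "Suc i < length (drop j p)"
  then show "{drop j p ! i, drop j p ! Suc i} \<in> E"
    using p unfolding is_path_def by (simp add: add.commute)
qed

lemma longest_path_exists:
  assumes "finite V" "is_path V E p0" "Q p0"
  obtains p where "is_path V E p" "Q p"
    "\<And>q. is_path V E q \<Longrightarrow> Q q \<Longrightarrow> length q \<le> length p"
proof -
  have "\<forall>q. is_path V E q \<and> Q q \<longrightarrow> length q < Suc (card V)"
    using is_path_length_le_card assms(1) less_Suc_eq_le by blast
  then show thesis
    using ex_has_greatest_nat[of "\<lambda>q. is_path V E q \<and> Q q" p0 length] assms(2,3) that by blast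
qed

lemma acyclic_path_last_neighbour:
  assumes s: "simple_graph V E" and nc: "\<not> has_cycle V E" and p: "is_path V E p"
    and l: "length p \<ge> 2" and e: "{last p, w} \<in> E" and w: "w \<in> set p"
  shows "w = p ! (length p - 2)"
proof -
  obtain j where j: "j < length p" "p ! j = w" using w by (meson in_set_conv_nth)
  have lp: "last p = p ! (length p - 1)" using l by (subst last_conv_nth) auto
  have "w \<noteq> last p" using simple_graph_edgeD[OF s e] by auto
  then have "j \<noteq> length p - 1" using j lp by auto
  moreover have "\<not> j < length p - 2"
  proof
    assume "j < length p - 2"
    then have "is_path V E (drop j p)" "length (drop j p) \<ge> 3"
      "{last (drop j p), hd (drop j p)} \<in> E"
      using is_path_drop[OF p j(1)] e j by (auto simp: hd_drop_conv_nth)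
    then show False using nc unfolding has_cycle_def by blast
  qed
  ultimately have "j = length p - 2" using j(1) by linarith
  then show ?thesis using j by simp
qed

lemma unextendable_path_last_neighbours:
  assumes s: "simple_graph V E" and nc: "\<not> has_cycle V E" and p: "is_path V E p"
    and l: "length p \<ge> 2"
    and unext: "\<And>w. w \<in> V \<Longrightarrow> w \<notin> set p \<Longrightarrow> {last p, w} \<in> E \<Longrightarrow> False"
  shows "neighbours V E (last p) = {p ! (length p - 2)}"
proof -
  have "Suc (length p - 2) < length p" "Suc (length p - 2) = length p - 1" using l by auto
  moreover have "last p = p ! (length p - 1)" using l by (subst last_conv_nth) auto
  ultimately have "p ! (length p - 2) \<in> neighbours V E (last p)"
    using is_path_nth_neighbours(2)[OF p] by metis
  moreover have "w \<in> {p ! (length p - 2)}" if "w \<in> neighbours V E (last p)" for w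
    using that unext acyclic_path_last_neighbour[OF s nc p l] unfolding neighbours_def by blast
  ultimately show ?thesis by blast
qed

lemma is_treeD:
  assumes "is_tree V E"
  shows "simple_graph V E" "\<not> has_cycle V E"
  using assms unfolding is_tree_def by auto

lemma tree_path_exists:
  assumes "is_tree V E" "u \<in> V" "v \<in> V"
  obtains p where "is_path V E p" "hd p = u" "last p = v"
  using assms unfolding is_tree_def connected_graph_def by blast

lemma obtain_other_vertex:
  assumes "finite V" "2 \<le> card V"
  obtains w where "w \<in> V" "w \<noteq> v"
  using assms by (metis card_le_Suc0_iff_eq insert_absorb insert_not_empty le_antisym
      not_less_eq_eq numeral_2_eq_2)

lemma is_path_second_vertex:
  assumes p: "is_path V E p" and "hd p \<noteq> last p"
  shows "length p \<ge> 2" "p ! 1 \<in> neighbours V E (hd p)"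
proof -
  have "p \<noteq> []" using p unfolding is_path_def by simp
  with assms(2) show l: "length p \<ge> 2"
    by (cases p) (auto simp: Suc_le_eq)
  then show "p ! 1 \<in> neighbours V E (hd p)"
    using is_path_nth_neighbours(1)[OF p, of 0] \<open>p \<noteq> []\<close> by (simp add: hd_conv_nth)
qed

lemma tree_has_leaf:
  assumes t: "is_tree V E" and c: "card V \<ge> 2"
  obtains v u where "v \<in> V" "neighbours V E v = {u}"
proof -
  note s = is_treeD(1)[OF t] and nc = is_treeD(2)[OF t]
  have fV: "finite V" using c card.infinite by force
  obtain a where a: "a \<in> V" using c by fastforce
  obtain b where b: "b \<in> V" "b \<noteq> a" using obtain_other_vertex[OF fV c] .
  obtain p0 where p0: "is_path V E p0" "hd p0 = a" "last p0 = b"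
    using tree_path_exists[OF t a b(1)] .
  have "length p0 \<ge> 2" using is_path_second_vertex(1)[OF p0(1)] p0 b by simp
  then obtain p where p: "is_path V E p" "length p \<ge> 2"
    and longest: "\<And>q. is_path V E q \<Longrightarrow> length q \<ge> 2 \<Longrightarrow> length q \<le> length p"
    using longest_path_exists[OF fV p0(1), of "\<lambda>q. length q \<ge> 2"] by blast
  have "neighbours V E (last p) = {p ! (length p - 2)}"
  proof (rule unextendable_path_last_neighbours[OF s nc p])
    fix w assume "w \<in> V" "w \<notin> set p" "{last p, w} \<in> E"
    then have "is_path V E (p @ [w])" by (rule is_path_append[OF p(1)])
    with longest[of "p @ [w]"] p(2) show False by simp
  qed
  moreover have "last p \<in> V" using p unfolding is_path_def by auto
  ultimately show thesis using that by blast
qed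

lemma leaf_edges:
  assumes "simple_graph V E" "neighbours V E v = {u}"
  shows "{e \<in> E. v \<in> e} = {{v, u}}"
  using edges_at_eq_image_neighbours[OF assms(1)] assms(2) by simp

text \<open>A path through a leaf would enter and leave it via its unique neighbour.\<close>

lemma path_avoids_leaf:
  assumes p: "is_path V E p" and leaf: "neighbours V E v = {u}"
    and "hd p \<noteq> v" "last p \<noteq> v"
  shows "v \<notin> set p"
proof
  assume "v \<in> set p"
  then obtain i where i: "i < length p" "p ! i = v" by (meson in_set_conv_nth)
  have "p \<noteq> []" using p unfolding is_path_def by simp
  have "i \<noteq> 0" using i assms(3) \<open>p \<noteq> []\<close> by (cases i) (auto simp: hd_conv_nth)
  moreover have "i \<noteq> length p - 1" using i assms(4) \<open>p \<noteq> []\<close> by (cases "i = length p - 1") (auto simp: last_conv_nth)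
  ultimately have idx: "Suc (i - 1) < length p" "Suc i < length p" "Suc (i - 1) = i" using i by auto
  then have "p ! (i - 1) = p ! Suc i"
    using is_path_nth_neighbours[OF p] leaf i(2) by (metis singletonD)
  moreover have "distinct p" using p unfolding is_path_def by simp
  ultimately show False using idx by (simp add: nth_eq_iff_index_eq)
qed

lemma tree_delete_leaf:
  assumes t: "is_tree V E" and v: "v \<in> V" and leaf: "neighbours V E v = {u}"
  shows "is_tree (V - {v}) (E - {{v, u}})"
proof -
  note s = is_treeD(1)[OF t] and nc = is_treeD(2)[OF t]
  let ?V = "V - {v}" and ?E = "E - {{v, u}}"
  have away: "v \<notin> e" if "e \<in> ?E" for e using that leaf_edges[OF s leaf] by blast
  have uV: "u \<in> ?V" using leaf neighbours_subset[OF s, of v] by auto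
  have s': "simple_graph ?V ?E" unfolding simple_graph_def
  proof (intro conjI ballI)
    show "finite ?V" using simple_graph_finite(1)[OF s] by simp
    fix e assume e: "e \<in> ?E"
    then obtain a b where "a \<in> V" "b \<in> V" "a \<noteq> b" "e = {a, b}"
      using simple_graph_edgeE[OF s] by blast
    with away[OF e] show "\<exists>a b. a \<in> ?V \<and> b \<in> ?V \<and> a \<noteq> b \<and> e = {a, b}" by blast
  qed
  have nc': "\<not> has_cycle ?V ?E" using has_cycle_mono[of ?V ?E V E] nc by blast
  have "connected_graph ?V ?E" unfolding connected_graph_def
  proof (intro ballI)
    fix a b assume a: "a \<in> ?V" and b: "b \<in> ?V"
    obtain p where p: "is_path V E p" "hd p = a" "last p = b"
      using tree_path_exists[OF t] a b by blast
    have vp: "v \<notin> set p" using path_avoids_leaf[OF p(1) leaf] p a b by auto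
    have "is_path ?V ?E p" unfolding is_path_def
    proof (intro conjI allI impI)
      show "p \<noteq> []" "distinct p" "set p \<subseteq> ?V" using p(1) vp unfolding is_path_def by auto
      fix i assume i: "Suc i < length p"
      then have "p ! i \<noteq> v" "p ! Suc i \<noteq> v" using vp by (metis Suc_lessD nth_mem)+
      then show "{p ! i, p ! Suc i} \<in> ?E"
        using p(1) i unfolding is_path_def by (auto simp: doubleton_eq_iff)
    qed
    with p show "\<exists>p. is_path ?V ?E p \<and> hd p = a \<and> last p = b" by blast
  qed
  with s' nc' uV show ?thesis unfolding is_tree_def by blast
qed

lemma tree_card_edges: "is_tree V E \<Longrightarrow> card E = card V - 1"
proof (induction "card V" arbitrary: V E)
  case 0
  then show ?case
    using is_treeD(1) simple_graph_finite(1) unfolding is_tree_def by fastforce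
next
  case (Suc k)
  note s = is_treeD(1)[OF Suc.prems]
  show ?case
  proof (cases "k = 0")
    case True
    then have "E = {}"
      using Suc(2) simple_graph_edgeE[OF s] simple_graph_finite(1)[OF s]
      by (metis One_nat_def card_le_Suc0_iff_eq equals0I le_refl)
    with True Suc(2) show ?thesis by simp
  next
    case False
    then have "2 \<le> card V" using Suc(2) by simp
    then obtain v u where v: "v \<in> V" "neighbours V E v = {u}"
      using tree_has_leaf[OF Suc.prems] by blast
    have "card (E - {{v, u}}) = k - 1"
      using Suc(1)[OF _ tree_delete_leaf[OF Suc.prems v]] Suc(2) v(1)
      by (simp add: simple_graph_finite(1)[OF s])
    moreover have "{v, u} \<in> E" using v(2) neighbours_edge by fastforce
    moreover then have "card E > 0" using simple_graph_finite(2)[OF s] card_gt_0_iff by blast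
    ultimately show ?thesis using False Suc(2) simple_graph_finite(2)[OF s]
      by (simp add: card_Diff_singleton_if)
  qed
qed

lemma tree_degree_pos:
  assumes t: "is_tree V E" and c: "2 \<le> card V" and v: "v \<in> V"
  shows "1 \<le> degree E v"
proof -
  note s = is_treeD(1)[OF t]
  obtain w where w: "w \<in> V" "w \<noteq> v"
    using obtain_other_vertex[OF simple_graph_finite(1)[OF s] c] .
  obtain p where p: "is_path V E p" "hd p = v" "last p = w"
    using tree_path_exists[OF t v w(1)] .
  then have "p ! 1 \<in> neighbours V E v" using is_path_second_vertex(2)[OF p(1)] w(2) by simp
  then have "neighbours V E v \<noteq> {}" by blast
  then show ?thesis
    unfolding degree_eq_card_neighbours[OF s] using finite_neighbours[OF s]
    by (simp add: Suc_le_eq card_gt_0_iff)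
qed

lemma tree_no_adjacent_leaves:
  assumes t: "is_tree V E" and c: "3 \<le> card V" and e: "{a, b} \<in> E"
  shows "\<not> (degree E a = 1 \<and> degree E b = 1)"
proof
  assume leaves: "degree E a = 1 \<and> degree E b = 1"
  note s = is_treeD(1)[OF t]
  have "{b, a} \<in> E" using e by (simp add: insert_commute)
  then have nb: "neighbours V E a = {b}" "neighbours V E b = {a}"
    using leaves degree_one_neighbours[OF s] neighboursI[OF s] e by blast+
  have a: "a \<in> V" using simple_graph_edgeD[OF s e] by simp
  have "\<not> V \<subseteq> {a, b}"
  proof
    assume "V \<subseteq> {a, b}"
    then have "card V \<le> card {a, b}" by (simp add: card_mono)
    also have "\<dots> \<le> 2" by (simp add: card_insert_if)
    finally show False using c by simp
  qed
  then obtain w where w: "w \<in> V" "w \<noteq> a" "w \<noteq> b" by blast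
  obtain p where p: "is_path V E p" "hd p = a" "last p = w"
    using tree_path_exists[OF t a w(1)] .
  have p1: "p ! 1 = b" using is_path_second_vertex(2)[OF p(1)] p w nb(1) by simp
  have l: "length p \<ge> 3"
  proof -
    have "length p \<ge> 2" using is_path_second_vertex(1)[OF p(1)] p w by simp
    moreover have "length p \<noteq> 2"
    proof
      assume "length p = 2"
      then have "last p = p ! 1" by (subst last_conv_nth) auto
      with p p1 w show False by simp
    qed
    ultimately show ?thesis by simp
  qed
  moreover have "hd p = p ! 0" using l by (subst hd_conv_nth) auto
  ultimately have "p ! 2 = p ! 0"
    using is_path_nth_neighbours(1)[OF p(1), of 1] nb(2) p1 p(2) by (simp add: numeral_2_eq_2)
  moreover have "distinct p" using p unfolding is_path_def by simp
  moreover have "2 < length p" "0 < length p" using l by auto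
  ultimately show False using nth_eq_iff_index_eq[of p 2 0] by simp
qed

lemma acyclic_no_triangle:
  assumes s: "simple_graph V E" and nc: "\<not> has_cycle V E"
    and "{a, b} \<in> E" "{b, c} \<in> E"
  shows "{c, a} \<notin> E"
proof
  assume ca: "{c, a} \<in> E"
  then have "is_path V E [a, b, c]"
    using assms simple_graph_edgeD[OF s] simple_graph_no_loop[OF s] by (auto simp: is_path_Cons_Cons)
  with ca nc show False unfolding has_cycle_def by force
qed

lemma acyclic_no_square:
  assumes s: "simple_graph V E" and nc: "\<not> has_cycle V E"
    and "{a, b} \<in> E" "{b, c} \<in> E" "{c, d} \<in> E" "a \<noteq> c" "b \<noteq> d"
  shows "{d, a} \<notin> E"
proof
  assume da: "{d, a} \<in> E"
  then have "is_path V E [a, b, c, d]"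
    using assms simple_graph_edgeD[OF s] simple_graph_no_loop[OF s] by (auto simp: is_path_Cons_Cons)
  with da nc show False unfolding has_cycle_def by force
qed

section \<open>Splitting the Sombor index into vertex charges\<close>

lemma sqrt_2_bounds: "1.414 < sqrt 2" "sqrt 2 < 1.4143"
  by (rule real_less_rsqrt real_less_lsqrt; simp add: power2_eq_square)+

lemma sqrt_5_bounds: "2.236 < sqrt 5" "sqrt 5 < 2.2361"
  by (rule real_less_rsqrt real_less_lsqrt; simp add: power2_eq_square)+

lemma sqrt_8: "sqrt 8 = 2 * sqrt 2"
  using real_sqrt_mult[of 4 2] by simp

text \<open>The share of an edge credited to its end of degree a when the other end has degree b.
  A leaf always receives sqrt 5 - sqrt 2 and a vertex of degree 2 receives sqrt 2 per edge.\<close>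

definition edge_share :: "nat \<Rightarrow> nat \<Rightarrow> real" where
  "edge_share a b =
     (if a = 1 then sqrt 5 - sqrt 2
      else if b = 1 then sqrt ((real a)\<^sup>2 + 1) - sqrt 5 + sqrt 2
      else if a = 2 then sqrt 2
      else if b = 2 then sqrt ((real a)\<^sup>2 + 4) - sqrt 2
      else sqrt ((real a)\<^sup>2 + (real b)\<^sup>2) / 2)"

lemma edge_share_add_swap:
  assumes "1 \<le> a" "1 \<le> b" "\<not> (a = 1 \<and> b = 1)"
  shows "edge_share a b + edge_share b a = sqrt ((real a)\<^sup>2 + (real b)\<^sup>2)"
proof -
  consider "a = 1" | "b = 1" | "a = 2" "b = 2" | "a = 2" "b \<ge> 3" | "a \<ge> 3" "b = 2" | "a \<ge> 3" "b \<ge> 3"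
    using assms by linarith
  then show ?thesis
    by cases (use assms in \<open>auto simp: edge_share_def sqrt_8 add.commute\<close>)
qed

lemma edge_share_ge:
  assumes a: "3 \<le> a" and b: "1 \<le> b"
  shows "2.1 \<le> edge_share a b"
proof -
  have a9: "9 \<le> (real a)\<^sup>2" using power_mono[of 3 "real a" 2] a by simp
  consider "b = 1" | "b = 2" | "3 \<le> b" using b by linarith
  then show ?thesis
  proof cases
    case 1
    have "3.16 \<le> sqrt ((real a)\<^sup>2 + 1)"
      by (rule real_le_rsqrt) (use a9 in \<open>simp add: power2_eq_square\<close>)
    then show ?thesis using 1 a sqrt_2_bounds sqrt_5_bounds by (simp add: edge_share_def)
  next
    case 2
    have "3.6 \<le> sqrt ((real a)\<^sup>2 + 4)"
      by (rule real_le_rsqrt) (use a9 in \<open>simp add: power2_eq_square\<close>)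
    then show ?thesis using 2 a sqrt_2_bounds by (simp add: edge_share_def)
  next
    case 3
    have "9 \<le> (real b)\<^sup>2" using power_mono[of 3 "real b" 2] 3 by simp
    then have "4.2 \<le> sqrt ((real a)\<^sup>2 + (real b)\<^sup>2)"
      by (intro real_le_rsqrt) (use a9 in \<open>simp add: power2_eq_square\<close>)
    then show ?thesis using 3 a by (simp add: edge_share_def)
  qed
qed

text \<open>At the hub h the split is different: h keeps the same amount from every non-pendant
  neighbour, whatever its degree.\<close>

definition share :: "'a set set \<Rightarrow> 'a \<Rightarrow> 'a \<Rightarrow> 'a \<Rightarrow> real" where
  "share E h v u =
     (if v = h then
        (if degree E u = 1 then sqrt ((real (degree E h))\<^sup>2 + 1) - sqrt 5 + sqrt 2
         else sqrt ((real (degree E h))\<^sup>2 + 4) - sqrt 2)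
      else if u = h then
        (if degree E v = 1 then sqrt 5 - sqrt 2
         else sqrt ((real (degree E h))\<^sup>2 + (real (degree E v))\<^sup>2)
                - sqrt ((real (degree E h))\<^sup>2 + 4) + sqrt 2)
      else edge_share (degree E v) (degree E u))"

definition charge :: "'a set \<Rightarrow> 'a set set \<Rightarrow> 'a \<Rightarrow> 'a \<Rightarrow> real" where
  "charge V E h v = (\<Sum>u\<in>neighbours V E v. share E h v u)"

lemma share_add_swap:
  assumes t: "is_tree V E" and c: "3 \<le> card V" and e: "{a, b} \<in> E"
  shows "share E h a b + share E h b a = sqrt ((real (degree E a))\<^sup>2 + (real (degree E b))\<^sup>2)"
proof -
  note s = is_treeD(1)[OF t]
  have ab: "a \<in> V" "b \<in> V" "a \<noteq> b" using simple_graph_edgeD[OF s e] by auto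
  have "1 \<le> degree E a" "1 \<le> degree E b" using tree_degree_pos[OF t] c ab by auto
  moreover have "\<not> (degree E a = 1 \<and> degree E b = 1)" by (rule tree_no_adjacent_leaves[OF t c e])
  ultimately show ?thesis
    using ab edge_share_add_swap[of "degree E a" "degree E b"]
    by (cases "a = h"; cases "b = h") (auto simp: share_def add.commute)
qed

lemma sombor_eq_sum_charge:
  assumes t: "is_tree V E" and c: "3 \<le> card V"
  shows "sombor V E = (\<Sum>v\<in>V. charge V E h v)"
  unfolding sombor_def charge_def
proof (rule sum_edges_split_halves[OF is_treeD(1)[OF t]])
  fix a b assume e: "{a, b} \<in> E"
  then have "a \<noteq> b" using simple_graph_edgeD[OF is_treeD(1)[OF t] e] by simp
  then show "share E h a b + share E h b a = sqrt (\<Sum>v\<in>{a, b}. (real (degree E v))\<^sup>2)"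
    using share_add_swap[OF t c e] by simp
qed

definition pendant_neighbours :: "'a set \<Rightarrow> 'a set set \<Rightarrow> 'a \<Rightarrow> 'a set" where
  "pendant_neighbours V E h = {u \<in> neighbours V E h. degree E u = 1}"

lemma charge_hub:
  fixes h :: 'a
  assumes s: "simple_graph V E"
  defines "D \<equiv> real (degree E h)" and "L \<equiv> real (card (pendant_neighbours V E h))"
  shows "charge V E h h = L * (sqrt (D\<^sup>2 + 1) - sqrt 5 + sqrt 2) + (D - L) * (sqrt (D\<^sup>2 + 4) - sqrt 2)"
proof -
  let ?N = "neighbours V E h" and ?P = "pendant_neighbours V E h"
  have fin: "finite ?N" by (rule finite_neighbours[OF s])
  have P: "?N \<inter> {u. degree E u = 1} = ?P" "?P \<subseteq> ?N"
    unfolding pendant_neighbours_def by auto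
  have "?N \<inter> - {u. degree E u = 1} = ?N - ?P" unfolding pendant_neighbours_def by auto
  then have "real (card (?N \<inter> - {u. degree E u = 1})) = D - L"
    unfolding D_def L_def degree_eq_card_neighbours[OF s]
    using fin P(2) by (simp add: card_Diff_subset of_nat_diff card_mono finite_subset)
  then show ?thesis
    unfolding charge_def share_def using fin P(1) by (simp add: sum.If_cases L_def D_def)
qed

lemma charge_pendant:
  assumes s: "simple_graph V E" and "v \<noteq> h" "degree E v = 1"
  shows "charge V E h v = sqrt 5 - sqrt 2"
proof -
  obtain u where "neighbours V E v = {u}"
    using assms degree_eq_card_neighbours[OF s] card_1_singletonE by metis
  with assms show ?thesis unfolding charge_def by (simp add: share_def edge_share_def)
qed

lemma charge_degree_two:
  assumes s: "simple_graph V E" and "v \<noteq> h" "degree E v = 2"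
  shows "charge V E h v = 2 * sqrt 2"
proof -
  have "share E h v u = sqrt 2" for u using assms by (simp add: share_def edge_share_def)
  then show ?thesis using assms degree_eq_card_neighbours[OF s, of v] by (simp add: charge_def)
qed

lemma charge_degree_ge_3:
  assumes t: "is_tree V E" and c: "3 \<le> card V" and v: "v \<in> V" "v \<noteq> h" and d: "3 \<le> degree E v"
  shows "2.1 * real (degree E v) - 0.7 \<le> charge V E h v"
proof -
  note s = is_treeD(1)[OF t]
  let ?N = "neighbours V E v"
  have "2.1 - (if u = h then 0.7 else 0) \<le> share E h v u" if u: "u \<in> ?N" for u
  proof (cases "u = h")
    case True
    have "4 \<le> (real (degree E v))\<^sup>2" using power_mono[of 2 "real (degree E v)" 2] d by simp
    then have "sqrt ((real (degree E h))\<^sup>2 + 4) \<le> sqrt ((real (degree E h))\<^sup>2 + (real (degree E v))\<^sup>2)"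
      by simp
    moreover have "share E h v u = sqrt ((real (degree E h))\<^sup>2 + (real (degree E v))\<^sup>2)
        - sqrt ((real (degree E h))\<^sup>2 + 4) + sqrt 2"
      using True v d by (simp add: share_def)
    ultimately have "sqrt 2 \<le> share E h v u" by linarith
    then show ?thesis using True sqrt_2_bounds by simp
  next
    case False
    have "1 \<le> degree E u" using tree_degree_pos[OF t] c u neighbours_subset[OF s] by force
    then show ?thesis using False v edge_share_ge[OF d] by (simp add: share_def)
  qed
  then have "(\<Sum>u\<in>?N. 2.1 - (if u = h then 0.7 else 0)) \<le> charge V E h v"
    unfolding charge_def by (rule sum_mono)
  moreover have "(\<Sum>u\<in>?N. (2.1::real) - (if u = h then 0.7 else 0))
      = 2.1 * real (degree E v) - (if h \<in> ?N then 0.7 else 0)"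
    using finite_neighbours[OF s] degree_eq_card_neighbours[OF s] by (simp add: sum_subtractf)
  ultimately show ?thesis by (auto split: if_splits)
qed

text \<open>The charges of non-hub vertices of degree 1 and 2 lie on the line below, which all other
  non-hub charges exceed.\<close>

definition charge_excess :: "'a set \<Rightarrow> 'a set set \<Rightarrow> 'a \<Rightarrow> 'a \<Rightarrow> real" where
  "charge_excess V E h v =
     charge V E h v - (2 * sqrt 5 - 4 * sqrt 2 + (3 * sqrt 2 - sqrt 5) * real (degree E v))"

lemma charge_excess:
  assumes t: "is_tree V E" and c: "3 \<le> card V" and v: "v \<in> V" "v \<noteq> h"
  shows "0 \<le> charge_excess V E h v" "charge_excess V E h v = 0 \<longleftrightarrow> degree E v \<le> 2"
proof -
  note s = is_treeD(1)[OF t]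
  have "1 \<le> degree E v" using tree_degree_pos[OF t] c v by simp
  then consider "degree E v = 1" | "degree E v = 2" | "3 \<le> degree E v" by linarith
  then have "(degree E v \<le> 2 \<longrightarrow> charge_excess V E h v = 0)
      \<and> (3 \<le> degree E v \<longrightarrow> 0 < charge_excess V E h v)"
  proof cases
    case 1 then show ?thesis using charge_pendant[OF s v(2)] by (simp add: charge_excess_def)
  next
    case 2 then show ?thesis using charge_degree_two[OF s v(2)] by (simp add: charge_excess_def)
  next
    case 3
    define d where "d = real (degree E v)"
    have d3: "3 \<le> d" using 3 unfolding d_def by simp
    have "3 * sqrt 2 - sqrt 5 \<le> 2007 / 1000" using sqrt_2_bounds sqrt_5_bounds by simp
    then have "(3 * sqrt 2 - sqrt 5) * d \<le> 2007 / 1000 * d" using d3 by (simp add: mult_right_mono)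
    moreover have "2 * sqrt 5 - 4 * sqrt 2 < - 118 / 100" using sqrt_2_bounds sqrt_5_bounds by simp
    ultimately have "2 * sqrt 5 - 4 * sqrt 2 + (3 * sqrt 2 - sqrt 5) * d < 21 / 10 * d - 7 / 10"
      using d3 by linarith
    then show ?thesis
      using 3 charge_degree_ge_3[OF t c v 3] unfolding charge_excess_def d_def by simp
  qed
  then show "0 \<le> charge_excess V E h v" "charge_excess V E h v = 0 \<longleftrightarrow> degree E v \<le> 2"
    by force+
qed

definition pendant_gain :: "nat \<Rightarrow> real" where
  "pendant_gain D = sqrt ((real D)\<^sup>2 + 1) - sqrt ((real D)\<^sup>2 + 4) + 2 * sqrt 2 - sqrt 5"

lemma pendant_gain_pos:
  assumes "3 \<le> D"
  shows "0 < pendant_gain D"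
proof -
  define P where "P = sqrt ((real D)\<^sup>2 + 1)"
  have "9 \<le> (real D)\<^sup>2" using power_mono[of 3 "real D" 2] assms by simp
  then have P3: "3 \<le> P" unfolding P_def
    by (intro real_le_rsqrt) (simp add: power2_eq_square)
  have "sqrt ((real D)\<^sup>2 + 4) < P + 0.59"
  proof (rule real_less_lsqrt)
    have "(P + 0.59)\<^sup>2 = P\<^sup>2 + 1.18 * P + 0.3481" by (simp add: power2_eq_square algebra_simps)
    then show "(real D)\<^sup>2 + 4 < (P + 0.59)\<^sup>2" using P3 by (simp add: P_def)
  qed (use P3 in simp)
  then show ?thesis
    using sqrt_2_bounds sqrt_5_bounds unfolding pendant_gain_def P_def by simp
qed

lemma tree_sum_degree:
  assumes t: "is_tree V E"
  shows "(\<Sum>v\<in>V. real (degree E v)) = 2 * (real (card V) - 1)"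
proof -
  have "card V \<noteq> 0"
    using t simple_graph_finite(1)[OF is_treeD(1)[OF t]] unfolding is_tree_def by simp
  moreover have "(\<Sum>v\<in>V. degree E v) = 2 * (card V - 1)"
    using sum_degree_eq_twice_card_edges[OF is_treeD(1)[OF t]] tree_card_edges[OF t] by simp
  ultimately show ?thesis by (simp flip: of_nat_sum)
qed

lemma sombor_eq_charging:
  assumes t: "is_tree V E" and c: "card V = n" and h: "h \<in> V" and D: "degree E h = D"
    and D3: "3 \<le> D"
  shows "sombor V E = real D * sqrt ((real D)\<^sup>2 + 4) + sqrt 8 * (real n - 2 * real D - 1)
      + sqrt 5 * real D + real (card (pendant_neighbours V E h)) * pendant_gain D
      + (\<Sum>v\<in>V - {h}. charge_excess V E h v)"
proof -
  note s = is_treeD(1)[OF t]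
  have fin: "finite V" by (rule simple_graph_finite(1)[OF s])
  have n3: "3 \<le> n" using degree_less_card[OF s h] D D3 c by simp
  define L where "L = real (card (pendant_neighbours V E h))"
  define line where "line v = 2 * sqrt 5 - 4 * sqrt 2 + (3 * sqrt 2 - sqrt 5) * real (degree E v)"
    for v
  have "sombor V E = charge V E h h + (\<Sum>v\<in>V - {h}. charge V E h v)"
    using sombor_eq_sum_charge[OF t _, of h] c n3 sum.remove[OF fin h, of "charge V E h"] by simp
  also have "(\<Sum>v\<in>V - {h}. charge V E h v)
      = (\<Sum>v\<in>V - {h}. line v) + (\<Sum>v\<in>V - {h}. charge_excess V E h v)"
    unfolding charge_excess_def line_def by (simp add: sum.distrib[symmetric])
  also have "(\<Sum>v\<in>V - {h}. line v)
      = (2 * sqrt 5 - 4 * sqrt 2) * (real n - 1) + (3 * sqrt 2 - sqrt 5) * (2 * real n - 2 - real D)"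
  proof -
    have "(\<Sum>v\<in>V - {h}. real (degree E v)) = 2 * real n - 2 - real D"
      using tree_sum_degree[OF t] sum.remove[OF fin h, of "\<lambda>v. real (degree E v)"] c D by simp
    then show ?thesis
      unfolding line_def using fin c h n3
      by (simp add: sum.distrib sum_distrib_left[symmetric] of_nat_diff)
  qed
  also have "charge V E h h
      = L * (sqrt ((real D)\<^sup>2 + 1) - sqrt 5 + sqrt 2) + (real D - L) * (sqrt ((real D)\<^sup>2 + 4) - sqrt 2)"
    using charge_hub[OF s, of h] D unfolding L_def by simp
  finally show ?thesis
    unfolding L_def pendant_gain_def sqrt_8 by (simp add: algebra_simps)
qed

section \<open>Counting pendant neighbours of the hub\<close>

text \<open>Sending each non-pendant neighbour of h to another one of its neighbours injects the
  non-pendant neighbours into the vertices at distance 2 from h, as a tree has neither triangles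
  nor 4-cycles.\<close>

definition away_neighbour :: "'a set \<Rightarrow> 'a set set \<Rightarrow> 'a \<Rightarrow> 'a \<Rightarrow> 'a" where
  "away_neighbour V E h c = (SOME w. w \<in> neighbours V E c \<and> w \<noteq> h)"

lemma away_neighbour:
  assumes t: "is_tree V E" and c: "c \<in> neighbours V E h" and d: "2 \<le> degree E c"
  shows "away_neighbour V E h c \<in> neighbours V E c"
    "away_neighbour V E h c \<in> V - insert h (neighbours V E h)"
proof -
  note s = is_treeD(1)[OF t] and nc = is_treeD(2)[OF t]
  let ?w = "away_neighbour V E h c"
  have "\<not> neighbours V E c \<subseteq> {h}"
  proof
    assume "neighbours V E c \<subseteq> {h}"
    then have "card (neighbours V E c) \<le> card {h}" by (intro card_mono) auto
    with d show False using degree_eq_card_neighbours[OF s] by simp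
  qed
  then have "\<exists>w. w \<in> neighbours V E c \<and> w \<noteq> h" by blast
  then have w: "?w \<in> neighbours V E c \<and> ?w \<noteq> h"
    unfolding away_neighbour_def by (rule someI_ex)
  then show "?w \<in> neighbours V E c" by simp
  have "?w \<notin> neighbours V E h"
  proof
    assume "?w \<in> neighbours V E h"
    then have "{?w, h} \<in> E" using neighbours_edge by fast
    moreover have "{h, c} \<in> E" using neighbours_edge[OF c] by simp
    moreover have "{c, ?w} \<in> E" using neighbours_edge w by fast
    ultimately show False using acyclic_no_triangle[OF s nc, of h c ?w] by simp
  qed
  then show "?w \<in> V - insert h (neighbours V E h)"
    using w neighbours_subset[OF s, of c] by blast
qed

lemma inj_on_away_neighbour:
  assumes t: "is_tree V E"
  shows "inj_on (away_neighbour V E h) {c \<in> neighbours V E h. 2 \<le> degree E c}"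
proof (rule inj_onI)
  note s = is_treeD(1)[OF t] and nc = is_treeD(2)[OF t]
  fix c c' assume c: "c \<in> {c \<in> neighbours V E h. 2 \<le> degree E c}"
    and c': "c' \<in> {c \<in> neighbours V E h. 2 \<le> degree E c}"
    and eq: "away_neighbour V E h c = away_neighbour V E h c'"
  let ?w = "away_neighbour V E h c"
  show "c = c'"
  proof (rule ccontr)
    assume "c \<noteq> c'"
    have hc: "{h, c} \<in> E" "{c', h} \<in> E" using c c' neighbours_edge by fast+
    have "?w \<in> neighbours V E c" using away_neighbour(1)[OF t] c by simp
    moreover have "?w \<in> neighbours V E c'" unfolding eq using away_neighbour(1)[OF t] c' by simp
    ultimately have "{c, ?w} \<in> E" "{?w, c'} \<in> E" using neighbours_edge by fast+
    moreover have "h \<noteq> ?w" using away_neighbour(2)[OF t, of c h] c by auto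
    ultimately show False
      using acyclic_no_square[OF s nc hc(1), of ?w c'] hc(2) \<open>c \<noteq> c'\<close> by simp
  qed
qed

lemma card_distance_two_vertices:
  assumes s: "simple_graph V E" and h: "h \<in> V"
  shows "card (V - insert h (neighbours V E h)) = card V - 1 - degree E h"
proof -
  have "V - insert h (neighbours V E h) = (V - {h}) - neighbours V E h" by blast
  then have "card (V - insert h (neighbours V E h)) = card (V - {h}) - card (neighbours V E h)"
    using neighbours_subset[OF s] finite_neighbours[OF s] by (simp add: card_Diff_subset)
  then show ?thesis
    using simple_graph_finite(1)[OF s] h degree_eq_card_neighbours[OF s] by simp
qed

lemma neighbours_eq_Un_pendant:
  assumes t: "is_tree V E" and c: "3 \<le> card V"
  shows "neighbours V E h = {c \<in> neighbours V E h. 2 \<le> degree E c} \<union> pendant_neighbours V E h"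
proof -
  have "1 \<le> degree E u" if "u \<in> neighbours V E h" for u
    using tree_degree_pos[OF t] c neighbours_subset[OF is_treeD(1)[OF t]] that by force
  then show ?thesis unfolding pendant_neighbours_def by force
qed

lemma card_neighbours_split:
  assumes t: "is_tree V E" and c: "3 \<le> card V"
  shows "card {c \<in> neighbours V E h. 2 \<le> degree E c} + card (pendant_neighbours V E h)
    = degree E h"
proof -
  note s = is_treeD(1)[OF t]
  let ?C = "{c \<in> neighbours V E h. 2 \<le> degree E c}" and ?P = "pendant_neighbours V E h"
  have "?C \<inter> ?P = {}" unfolding pendant_neighbours_def by auto
  moreover have "finite ?C" "finite ?P"
    using finite_neighbours[OF s] unfolding pendant_neighbours_def by auto
  ultimately show ?thesis
    using neighbours_eq_Un_pendant[OF t c, of h] degree_eq_card_neighbours[OF s] card_Un_disjoint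
    by metis
qed

lemma card_pendant_neighbours_ge:
  assumes t: "is_tree V E" and c: "3 \<le> card V" and h: "h \<in> V"
  shows "2 * degree E h \<le> card V - 1 + card (pendant_neighbours V E h)"
proof -
  note s = is_treeD(1)[OF t]
  let ?C = "{c \<in> neighbours V E h. 2 \<le> degree E c}"
  have "card ?C \<le> card (V - insert h (neighbours V E h))"
    using away_neighbour(2)[OF t] simple_graph_finite(1)[OF s]
    by (intro card_inj_on_le[OF inj_on_away_neighbour[OF t]]) auto
  then show ?thesis
    using card_distance_two_vertices[OF s h] card_neighbours_split[OF t c, of h]
      degree_less_card[OF s h] by linarith
qed

section \<open>Legs of spiders\<close>

lemma legsD:
  assumes "p \<in> legs V E h"
  shows "is_path V E p" "2 \<le> length p" "p ! 0 = h" "degree E (last p) = 1"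
    "last p = p ! (length p - 1)"
  using assms unfolding legs_def is_path_def by (auto simp: hd_conv_nth last_conv_nth)

text \<open>If no vertex other than h has degree above 2, every vertex of a leg after h has at most
  one neighbour besides its predecessor, so a leg is determined by its first edge.\<close>

lemma legs_agree:
  assumes s: "simple_graph V E" and deg2: "\<forall>v\<in>V - {h}. degree E v \<le> 2"
    and p: "p \<in> legs V E h" and q: "q \<in> legs V E h" and first: "p ! 1 = q ! 1"
  shows "Suc i < length p \<Longrightarrow> Suc i < length q \<Longrightarrow> p ! i = q ! i \<and> p ! Suc i = q ! Suc i"
proof (induction i)
  case 0
  then show ?case using legsD(3)[OF p] legsD(3)[OF q] first by simp
next
  case (Suc i)
  then have IH: "p ! i = q ! i" "p ! Suc i = q ! Suc i" by auto
  note P = legsD[OF p] and Q = legsD[OF q]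
  let ?w = "p ! Suc i"
  have dp: "distinct p" "distinct q" using P(1) Q(1) unfolding is_path_def by auto
  have "p \<noteq> []" using P(2) by auto
  then have "?w \<noteq> h" using P(3) nth_eq_iff_index_eq[OF dp(1), of "Suc i" 0] Suc.prems by simp
  moreover have "?w \<in> V" using is_path_nth_in_vertices[OF P(1)] Suc.prems by simp
  ultimately have deg: "card (neighbours V E ?w) \<le> 2"
    using deg2 degree_eq_card_neighbours[OF s] by auto
  have sub: "{p ! i, p ! Suc (Suc i), q ! Suc (Suc i)} \<subseteq> neighbours V E ?w"
    using is_path_nth_neighbours[OF P(1), of i] is_path_nth_neighbours[OF P(1), of "Suc i"]
      is_path_nth_neighbours[OF Q(1), of "Suc i"] Suc.prems IH by auto
  have "p ! i \<noteq> p ! Suc (Suc i)" "q ! i \<noteq> q ! Suc (Suc i)"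
    using nth_eq_iff_index_eq[OF dp(1), of i "Suc (Suc i)"]
      nth_eq_iff_index_eq[OF dp(2), of i "Suc (Suc i)"] Suc.prems by simp_all
  have "p ! Suc (Suc i) = q ! Suc (Suc i)"
  proof (rule ccontr)
    assume "p ! Suc (Suc i) \<noteq> q ! Suc (Suc i)"
    then have "card {p ! i, p ! Suc (Suc i), q ! Suc (Suc i)} = 3"
      using \<open>p ! i \<noteq> p ! Suc (Suc i)\<close> \<open>q ! i \<noteq> q ! Suc (Suc i)\<close> IH(1) by simp
    with card_mono[OF finite_neighbours[OF s] sub] deg show False by simp
  qed
  with IH show ?case by simp
qed

lemma legs_length_le:
  assumes s: "simple_graph V E" and deg2: "\<forall>v\<in>V - {h}. degree E v \<le> 2"
    and p: "p \<in> legs V E h" and q: "q \<in> legs V E h" and first: "p ! 1 = q ! 1"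
  shows "length q \<le> length p"
proof (rule ccontr)
  assume "\<not> length q \<le> length p"
  note P = legsD[OF p] and Q = legsD[OF q]
  define m where "m = length p - 1"
  have m: "Suc (m - 1) = m" "m < length p" "Suc m < length q"
    using P(2) \<open>\<not> length q \<le> length p\<close> unfolding m_def by auto
  then have "last p = q ! m" using legs_agree[OF s deg2 p q first, of "m - 1"] P(5) m_def by simp
  moreover have "q ! (m - 1) \<in> neighbours V E (q ! m)" "q ! Suc m \<in> neighbours V E (q ! m)"
    using is_path_nth_neighbours[OF Q(1)] m by (metis Suc_lessD)+
  moreover have "q ! (m - 1) \<noteq> q ! Suc m"
    using Q(1) m unfolding is_path_def by (simp add: nth_eq_iff_index_eq)
  ultimately have "card {q ! (m - 1), q ! Suc m} \<le> degree E (last p)"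
    unfolding degree_eq_card_neighbours[OF s]
    by (intro card_mono[OF finite_neighbours[OF s]]) auto
  then have "2 \<le> degree E (last p)" using \<open>q ! (m - 1) \<noteq> q ! Suc m\<close> by simp
  with P(4) show False by simp
qed

lemma inj_on_legs_second_vertex:
  assumes s: "simple_graph V E" and deg2: "\<forall>v\<in>V - {h}. degree E v \<le> 2"
  shows "inj_on (\<lambda>p. p ! 1) (legs V E h)"
proof (rule inj_onI)
  fix p q assume p: "p \<in> legs V E h" and q: "q \<in> legs V E h" and first: "p ! 1 = q ! 1"
  have len: "length p = length q"
    using legs_length_le[OF s deg2 p q first] legs_length_le[OF s deg2 q p first[symmetric]] by simp
  show "p = q"
  proof (rule nth_equalityI[OF len])
    fix i assume i: "i < length p"
    show "p ! i = q ! i"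
    proof (cases "Suc i < length p")
      case True then show ?thesis using legs_agree[OF s deg2 p q first] len by simp
    next
      case False
      then have "Suc (i - 1) = i" "Suc (i - 1) < length p" using i legsD(2)[OF p] by auto
      then show ?thesis using legs_agree[OF s deg2 p q first, of "i - 1"] len by simp
    qed
  qed
qed

lemma legs_second_vertex_neighbours:
  assumes "p \<in> legs V E h"
  shows "p ! 1 \<in> neighbours V E h"
  using is_path_nth_neighbours(1)[OF legsD(1)[OF assms], of 0] legsD(2,3)[OF assms] by simp

text \<open>A longest path starting with the edge from h to c ends in a leaf.\<close>

lemma legs_through_neighbour:
  assumes t: "is_tree V E" and c: "c \<in> neighbours V E h"
  obtains p where "p \<in> legs V E h" "p ! 1 = c"
proof -
  note s = is_treeD(1)[OF t] and nc = is_treeD(2)[OF t]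
  have e: "{h, c} \<in> E" "h \<noteq> c" "h \<in> V" "c \<in> V"
    using neighbours_edge[OF c] simple_graph_edgeD[OF s] by blast+
  then have "is_path V E [h, c]" by (simp add: is_path_Cons_Cons)
  then obtain p where p: "is_path V E p" "2 \<le> length p \<and> p ! 0 = h \<and> p ! 1 = c"
    and longest: "\<And>q. is_path V E q \<Longrightarrow> 2 \<le> length q \<and> q ! 0 = h \<and> q ! 1 = c
      \<Longrightarrow> length q \<le> length p"
    using longest_path_exists[OF simple_graph_finite(1)[OF s], of E "[h, c]"
        "\<lambda>q. 2 \<le> length q \<and> q ! 0 = h \<and> q ! 1 = c"] by auto
  have "neighbours V E (last p) = {p ! (length p - 2)}"
  proof (rule unextendable_path_last_neighbours[OF s nc p(1)])
    fix w assume "w \<in> V" "w \<notin> set p" "{last p, w} \<in> E"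
    then have "is_path V E (p @ [w])" by (rule is_path_append[OF p(1)])
    moreover have "2 \<le> length (p @ [w]) \<and> (p @ [w]) ! 0 = h \<and> (p @ [w]) ! 1 = c"
      using p(2) by (auto simp: nth_append)
    ultimately show False using longest[of "p @ [w]"] by simp
  qed (use p(2) in simp)
  moreover have "hd p = h" using p(2) by (subst hd_conv_nth) auto
  ultimately have "p \<in> legs V E h"
    using p degree_eq_card_neighbours[OF s] unfolding legs_def by auto
  with p(2) show thesis using that by blast
qed

lemma card_legs:
  assumes t: "is_tree V E" and deg2: "\<forall>v\<in>V - {h}. degree E v \<le> 2"
  shows "card (legs V E h) = degree E h"
proof -
  note s = is_treeD(1)[OF t]
  have "neighbours V E h \<subseteq> (\<lambda>p. p ! 1) ` legs V E h"
  proof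
    fix c assume "c \<in> neighbours V E h"
    then obtain p where "p \<in> legs V E h" "p ! 1 = c" by (rule legs_through_neighbour[OF t])
    then show "c \<in> (\<lambda>p. p ! 1) ` legs V E h" by force
  qed
  moreover have "(\<lambda>p. p ! 1) ` legs V E h \<subseteq> neighbours V E h"
    using legs_second_vertex_neighbours by (rule image_subsetI)
  ultimately have "bij_betw (\<lambda>p. p ! 1) (legs V E h) (neighbours V E h)"
    unfolding bij_betw_def using inj_on_legs_second_vertex[OF s deg2] by (simp add: subset_antisym)
  then show ?thesis by (simp add: bij_betw_same_card degree_eq_card_neighbours[OF s])
qed

lemma pendant_neighbours_iff_short_leg:
  assumes s: "simple_graph V E" and h: "h \<in> V"
  shows "pendant_neighbours V E h \<noteq> {} \<longleftrightarrow> (\<exists>p\<in>legs V E h. length p - 1 < 2)"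
proof
  assume "pendant_neighbours V E h \<noteq> {}"
  then obtain u where u: "u \<in> neighbours V E h" "degree E u = 1"
    unfolding pendant_neighbours_def by blast
  then have "{h, u} \<in> E" "u \<in> V" using neighbours_edge neighbours_subset[OF s] by fast+
  then have "is_path V E [h, u]"
    using h simple_graph_edgeD[OF s] by (simp add: is_path_Cons_Cons)
  then have "[h, u] \<in> legs V E h" using u(2) unfolding legs_def by simp
  then show "\<exists>p\<in>legs V E h. length p - 1 < 2" by force
next
  assume "\<exists>p\<in>legs V E h. length p - 1 < 2"
  then obtain p where p: "p \<in> legs V E h" "length p - 1 < 2" by blast
  then have "length p - 1 = 1" using legsD(2)[OF p(1)] by simp
  then have "last p = p ! 1" using legsD(5)[OF p(1)] by simp
  then have "p ! 1 \<in> pendant_neighbours V E h"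
    using legs_second_vertex_neighbours[OF p(1)] legsD(4)[OF p(1)]
    unfolding pendant_neighbours_def by simp
  then show "pendant_neighbours V E h \<noteq> {}" by blast
qed

lemma spider_long_legs_iff:
  assumes t: "is_tree V E" and h: "h \<in> V" and D: "degree E h = D" and D3: "3 \<le> D"
  shows "spider_long_legs V E D \<longleftrightarrow>
    pendant_neighbours V E h = {} \<and> (\<forall>v\<in>V - {h}. degree E v \<le> 2)"
proof
  note s = is_treeD(1)[OF t]
  have fin: "finite {v \<in> V. 2 < degree E v}" using simple_graph_finite(1)[OF s] by simp
  assume "spider_long_legs V E D"
  then obtain h' where h': "h' \<in> V" "2 < degree E h'" "\<forall>p\<in>legs V E h'. 2 \<le> length p - 1"
    and one: "card {v \<in> V. 2 < degree E v} \<le> 1"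
    unfolding spider_long_legs_def spider_def by blast
  have hub: "v = h" if "v \<in> V" "2 < degree E v" for v
    using one card_le_Suc0_iff_eq[OF fin] that h D D3 by auto
  then show "pendant_neighbours V E h = {} \<and> (\<forall>v\<in>V - {h}. degree E v \<le> 2)"
    using h'(3) hub[OF h'(1,2)] pendant_neighbours_iff_short_leg[OF s h] by force
next
  assume a: "pendant_neighbours V E h = {} \<and> (\<forall>v\<in>V - {h}. degree E v \<le> 2)"
  then have "{v \<in> V. 2 < degree E v} \<subseteq> {h}" by force
  then have "card {v \<in> V. 2 < degree E v} \<le> card {h}" by (intro card_mono) auto
  then have "spider V E" unfolding spider_def using t by simp
  moreover have "\<forall>p\<in>legs V E h. 2 \<le> length p - 1"
    using a pendant_neighbours_iff_short_leg[OF is_treeD(1)[OF t] h] by force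
  moreover have "card (legs V E h) = D" using card_legs[OF t] a D by simp
  moreover have "2 < degree E h" using D D3 by simp
  ultimately show "spider_long_legs V E D"
    unfolding spider_long_legs_def using h by blast
qed

section \<open>The trees T_nD\<close>

lemma graph_iso_of_edge_image:
  assumes F: "bij_betw F A V" and sub: "(\<lambda>e. F ` e) ` E' \<subseteq> E" and A: "\<forall>e\<in>E'. e \<subseteq> A"
    and fin: "finite E" and card: "card E' = card E"
  shows "graph_iso V E A E'"
proof -
  let ?f = "inv_into A F"
  have inj: "inj_on F A" using F by (rule bij_betw_imp_inj_on)
  have "inj_on (\<lambda>e. F ` e) E'"
    using inj_on_image_Pow[OF inj] by (rule inj_on_subset) (use A in blast)
  then have E: "E = (\<lambda>e. F ` e) ` E'"
    using card_subset_eq[OF fin sub] card by (simp add: card_image)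
  have img: "F ` {?f u, ?f v} = {u, v}" if "u \<in> V" "v \<in> V" for u v
    using that bij_betw_inv_into_right[OF F] by simp
  have "{u, v} \<in> E \<longleftrightarrow> {?f u, ?f v} \<in> E'" if uv: "u \<in> V" "v \<in> V" for u v
  proof
    assume "{u, v} \<in> E"
    then obtain e where e: "e \<in> E'" "{u, v} = F ` e" using E by blast
    then have "e = ?f ` {u, v}" using inv_into_image_cancel[OF inj] A by simp
    with e(1) show "{?f u, ?f v} \<in> E'" by simp
  next
    assume "{?f u, ?f v} \<in> E'"
    then show "{u, v} \<in> E" using E img[OF uv] by (metis image_eqI)
  qed
  then show ?thesis
    unfolding graph_iso_def using bij_betw_inv_into[OF F] by blast
qed

lemma graph_iso_neighbours:
  assumes f: "bij_betw f V V'" and pres: "\<forall>u\<in>V. \<forall>v\<in>V. {u, v} \<in> E \<longleftrightarrow> {f u, f v} \<in> E'"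
    and v: "v \<in> V"
  shows "f ` neighbours V E v = neighbours V' E' (f v)"
proof
  show "f ` neighbours V E v \<subseteq> neighbours V' E' (f v)"
    using f pres v unfolding neighbours_def bij_betw_def by auto
  show "neighbours V' E' (f v) \<subseteq> f ` neighbours V E v"
  proof
    fix w assume w: "w \<in> neighbours V' E' (f v)"
    then obtain u where "u \<in> V" "w = f u" using f unfolding neighbours_def bij_betw_def by auto
    with w pres v show "w \<in> f ` neighbours V E v" unfolding neighbours_def by auto
  qed
qed

lemma graph_iso_degree:
  assumes s: "simple_graph V E" and s': "simple_graph V' E'"
    and f: "bij_betw f V V'" and pres: "\<forall>u\<in>V. \<forall>v\<in>V. {u, v} \<in> E \<longleftrightarrow> {f u, f v} \<in> E'"
    and v: "v \<in> V"
  shows "degree E v = degree E' (f v)"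
proof -
  have "inj_on f (neighbours V E v)"
    using bij_betw_imp_inj_on[OF f] neighbours_subset[OF s] inj_on_subset by blast
  then show ?thesis
    using graph_iso_neighbours[OF f pres v] card_image
    by (metis degree_eq_card_neighbours[OF s] degree_eq_card_neighbours[OF s'])
qed

lemma T_nD_edge_iff:
  "{i, j} \<in> T_nD_E n D \<longleftrightarrow>
     (i = 0 \<and> 1 \<le> j \<and> j \<le> D) \<or> (j = 0 \<and> 1 \<le> i \<and> i \<le> D)
     \<or> (D < j \<and> j < n \<and> i = j - D) \<or> (D < i \<and> i < n \<and> j = i - D)"
  unfolding T_nD_E_def by (auto simp: doubleton_eq_iff)

lemma simple_graph_T_nD:
  assumes "1 \<le> D" "D < n"
  shows "simple_graph (T_nD_V n D) (T_nD_E n D)"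
  unfolding simple_graph_def T_nD_V_def
proof (intro conjI ballI)
  fix e assume "e \<in> T_nD_E n D"
  then obtain u v where "e = {u, v}" "u < n" "v < n" "u \<noteq> v"
    using assms unfolding T_nD_E_def by force
  then show "\<exists>u v. u \<in> {..<n} \<and> v \<in> {..<n} \<and> u \<noteq> v \<and> e = {u, v}" by blast
qed simp

lemma card_T_nD_E:
  assumes "1 \<le> D" "D < n"
  shows "card (T_nD_E n D) = n - 1"
proof -
  let ?A = "(\<lambda>i. {0, i}) ` {1..D}" and ?B = "(\<lambda>i. {i - D, i}) ` {D<..<n}"
  have "T_nD_E n D = ?A \<union> ?B" unfolding T_nD_E_def by auto
  moreover have "?A \<inter> ?B = {}" using assms by (auto simp: doubleton_eq_iff)
  moreover have "card ?A = D" by (subst card_image) (auto intro: inj_onI simp: doubleton_eq_iff)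
  moreover have "inj_on (\<lambda>i. {i - D, i}) {D<..<n}"
    unfolding inj_on_def doubleton_eq_iff by auto
  then have "card ?B = n - 1 - D" by (simp add: card_image)
  ultimately show ?thesis using assms by (simp add: card_Un_disjoint)
qed

lemma degree_T_nD:
  assumes D: "1 \<le> D" "D < n" "n \<le> 2 * D + 1" and j: "j < n"
  shows "degree (T_nD_E n D) j = (if j = 0 then D else if j + D < n then 2 else 1)"
proof -
  have "neighbours {..<n} (T_nD_E n D) j =
      (if j = 0 then {1..D} else if j \<le> D then (if j + D < n then {0, j + D} else {0})
       else {j - D})"
    unfolding neighbours_def T_nD_edge_iff using D j by auto
  moreover have "simple_graph {..<n} (T_nD_E n D)"
    using simple_graph_T_nD[OF D(1,2)] unfolding T_nD_V_def .
  then have "degree (T_nD_E n D) j = card (neighbours {..<n} (T_nD_E n D) j)"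
    by (rule degree_eq_card_neighbours)
  ultimately show ?thesis using D j by auto
qed

lemma bij_betw_away_neighbour:
  assumes t: "is_tree V E" and c: "card V = n" and h: "h \<in> V" and D: "degree E h = D"
    and D3: "3 \<le> D" and n: "n \<le> 2 * D + 1"
    and P: "card (pendant_neighbours V E h) = 2 * D + 1 - n"
  shows "bij_betw (away_neighbour V E h)
    {c \<in> neighbours V E h. 2 \<le> degree E c} (V - insert h (neighbours V E h))"
proof -
  note s = is_treeD(1)[OF t]
  let ?C = "{c \<in> neighbours V E h. 2 \<le> degree E c}" and ?X = "V - insert h (neighbours V E h)"
  have c3: "3 \<le> card V" using degree_less_card[OF s h] c D D3 by simp
  have inj: "inj_on (away_neighbour V E h) ?C" by (rule inj_on_away_neighbour[OF t])
  have "away_neighbour V E h ` ?C = ?X"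
  proof (rule card_subset_eq)
    show "finite ?X" using simple_graph_finite(1)[OF s] by simp
    show "away_neighbour V E h ` ?C \<subseteq> ?X"
      using away_neighbour(2)[OF t] by (auto intro!: image_subsetI)
    show "card (away_neighbour V E h ` ?C) = card ?X"
      using card_image[OF inj] card_neighbours_split[OF t c3, of h]
        card_distance_two_vertices[OF s h] P c D n by simp
  qed
  with inj show ?thesis unfolding bij_betw_def by blast
qed

text \<open>The enumeration follows the numbering of \<open>T_nD_E\<close>: h, then its non-pendant and its
  pendant neighbours, then the away neighbours of the non-pendant ones in the same order.\<close>

lemma T_nD_enumeration:
  assumes t: "is_tree V E" and c: "card V = n" and h: "h \<in> V" and D: "degree E h = D"
    and D3: "3 \<le> D" and n: "n \<le> 2 * D + 1"
    and P: "card (pendant_neighbours V E h) = 2 * D + 1 - n"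
  obtains ps where "distinct ps" "set ps = V" "length ps = n" "ps ! 0 = h"
    "\<And>i. 1 \<le> i \<Longrightarrow> i \<le> D \<Longrightarrow> ps ! i \<in> neighbours V E h"
    "\<And>i. 1 \<le> i \<Longrightarrow> i + D < n \<Longrightarrow> ps ! (i + D) \<in> neighbours V E (ps ! i)"
proof -
  note s = is_treeD(1)[OF t]
  let ?N = "neighbours V E h" and ?P = "pendant_neighbours V E h"
  let ?C = "{c \<in> ?N. 2 \<le> degree E c}" and ?x = "away_neighbour V E h"
  have c3: "3 \<le> card V" using degree_less_card[OF s h] c D D3 by simp
  have x: "bij_betw ?x ?C (V - insert h ?N)" by (rule bij_betw_away_neighbour[OF assms])
  have fin: "finite ?C" "finite ?P"
    using finite_neighbours[OF s] unfolding pendant_neighbours_def by auto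
  obtain cs where cs: "set cs = ?C" "distinct cs" using finite_distinct_list[OF fin(1)] by blast
  obtain ls where ls: "set ls = ?P" "distinct ls" using finite_distinct_list[OF fin(2)] by blast
  define ns where "ns = cs @ ls"
  have len: "length ns = D" "length cs + D = n - 1"
    using distinct_card[OF cs(2)] distinct_card[OF ls(2)] cs(1) ls(1) P n D
      card_neighbours_split[OF t c3, of h] unfolding ns_def by simp_all
  have "1 \<le> n" using c3 c by simp
  have ns: "set ns = ?N" "distinct ns"
    using cs ls neighbours_eq_Un_pendant[OF t c3, of h]
    unfolding ns_def pendant_neighbours_def by auto
  have xs: "set (map ?x cs) = V - insert h ?N" "distinct (map ?x cs)"
    using x cs unfolding bij_betw_def by (simp_all add: distinct_map)
  define ps where "ps = h # ns @ map ?x cs"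
  show thesis
  proof
    show "distinct ps" "set ps = V" "length ps = n" "ps ! 0 = h"
      unfolding ps_def using ns xs h len \<open>1 \<le> n\<close> neighbours_subset[OF s, of h] by auto
    show "ps ! i \<in> ?N" if "1 \<le> i" "i \<le> D" for i
      using that len ns(1) nth_mem[of "i - 1" ns] unfolding ps_def by (simp add: nth_append_left)
    show "ps ! (i + D) \<in> neighbours V E (ps ! i)" if "1 \<le> i" "i + D < n" for i
    proof -
      have j: "i - 1 < length cs" using that len by simp
      then have "ps ! i \<in> ?C" "ps ! (i + D) = ?x (ps ! i)"
        using that len cs(1) nth_mem[OF j] unfolding ps_def ns_def
        by (simp_all add: nth_append_left nth_append_right)
      then show ?thesis using away_neighbour(1)[OF t] by auto
    qed
  qed
qed

text \<open>Every edge of \<open>T_nD_E\<close> is mapped to an edge of E, and both trees have n - 1 edges.\<close>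

lemma graph_iso_T_nD:
  assumes t: "is_tree V E" and c: "card V = n" and h: "h \<in> V" and D: "degree E h = D"
    and D3: "3 \<le> D" and n: "n \<le> 2 * D + 1"
    and P: "card (pendant_neighbours V E h) = 2 * D + 1 - n"
  shows "graph_iso V E (T_nD_V n D) (T_nD_E n D)"
proof -
  obtain ps where ps: "distinct ps" "set ps = V" "length ps = n" "ps ! 0 = h"
    and hub: "\<And>i. 1 \<le> i \<Longrightarrow> i \<le> D \<Longrightarrow> ps ! i \<in> neighbours V E h"
    and leg: "\<And>i. 1 \<le> i \<Longrightarrow> i + D < n \<Longrightarrow> ps ! (i + D) \<in> neighbours V E (ps ! i)"
    by (rule T_nD_enumeration[OF assms]) (rule that)
  note s = is_treeD(1)[OF t]
  have Dn: "D < n" using degree_less_card[OF s h] c D by simp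
  have F: "bij_betw ((!) ps) {..<n} V" using ps by (intro bij_betw_nth) auto
  have sub: "(\<lambda>e. (!) ps ` e) ` T_nD_E n D \<subseteq> E"
  proof
    fix e assume "e \<in> (\<lambda>e. (!) ps ` e) ` T_nD_E n D"
    then consider i where "1 \<le> i" "i \<le> D" "e = {ps ! 0, ps ! i}"
      | i where "D < i" "i < n" "e = {ps ! (i - D), ps ! (i - D + D)}"
      unfolding T_nD_E_def by auto
    then show "e \<in> E"
    proof cases
      case 1 then show ?thesis using neighbours_edge[OF hub] ps(4) by simp
    next
      case 2 then show ?thesis using neighbours_edge[OF leg[of "i - D"]] by simp
    qed
  qed
  have A: "\<forall>e\<in>T_nD_E n D. e \<subseteq> {..<n}" using Dn unfolding T_nD_E_def by auto
  have "card (T_nD_E n D) = card E"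
    using card_T_nD_E[of D n] tree_card_edges[OF t] c Dn D3 by simp
  then show ?thesis
    unfolding T_nD_V_def by (rule graph_iso_of_edge_image[OF F sub A simple_graph_finite(2)[OF s]])
qed

lemma graph_iso_T_nD_degree:
  assumes s: "simple_graph V E" and f: "bij_betw f V {..<n}"
    and pres: "\<forall>u\<in>V. \<forall>v\<in>V. {u, v} \<in> E \<longleftrightarrow> {f u, f v} \<in> T_nD_E n D"
    and D: "1 \<le> D" "D < n" "n \<le> 2 * D + 1" and v: "v \<in> V"
  shows "degree E v = (if f v = 0 then D else if f v + D < n then 2 else 1)"
proof -
  have "simple_graph {..<n} (T_nD_E n D)"
    using simple_graph_T_nD[OF D(1,2)] unfolding T_nD_V_def .
  moreover have "f v < n" using f v unfolding bij_betw_def by auto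
  ultimately show ?thesis using graph_iso_degree[OF s _ f pres v] degree_T_nD[OF D] by simp
qed

lemma graph_iso_T_nD_structure:
  assumes s: "simple_graph V E" and iso: "graph_iso V E (T_nD_V n D) (T_nD_E n D)"
    and h: "h \<in> V" and D: "degree E h = D" and D3: "3 \<le> D" and Dn: "D < n"
    and n: "n \<le> 2 * D + 1"
  shows "card (pendant_neighbours V E h) = 2 * D + 1 - n" "\<forall>v\<in>V - {h}. degree E v \<le> 2"
proof -
  obtain f where f: "bij_betw f V {..<n}"
    and pres: "\<forall>u\<in>V. \<forall>v\<in>V. {u, v} \<in> E \<longleftrightarrow> {f u, f v} \<in> T_nD_E n D"
    using iso unfolding graph_iso_def T_nD_V_def by blast
  have inj: "inj_on f V" using f by (rule bij_betw_imp_inj_on)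
  have "1 \<le> D" using D3 by simp
  note deg = graph_iso_T_nD_degree[OF s f pres this Dn n]
  have fh: "f h = 0" using deg[OF h] D D3 by (auto split: if_splits)
  show "\<forall>v\<in>V - {h}. degree E v \<le> 2"
  proof
    fix v assume v: "v \<in> V - {h}"
    then have "f v \<noteq> 0" using inj_onD[OF inj, of v h] fh h by auto
    then show "degree E v \<le> 2" using deg v by simp
  qed
  have "f ` neighbours V E h = neighbours {..<n} (T_nD_E n D) 0"
    using graph_iso_neighbours[OF f pres h] fh by simp
  also have "\<dots> = {1..D}" unfolding neighbours_def T_nD_edge_iff using Dn by auto
  finally have N: "f ` neighbours V E h = {1..D}" .
  have "u \<in> pendant_neighbours V E h \<longleftrightarrow> u \<in> neighbours V E h \<and> n \<le> f u + D" for u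
  proof (cases "u \<in> neighbours V E h")
    case True
    then have "f u \<in> {1..D}" "u \<in> V" using N neighbours_subset[OF s, of h] by blast+
    then show ?thesis using deg True unfolding pendant_neighbours_def by auto
  qed (simp add: pendant_neighbours_def)
  then have "f ` pendant_neighbours V E h = {j \<in> f ` neighbours V E h. n \<le> j + D}" by auto
  also have "\<dots> = {n - D..D}" unfolding N using Dn by auto
  finally have "card (f ` pendant_neighbours V E h) = 2 * D + 1 - n" using n Dn by simp
  moreover have "pendant_neighbours V E h \<subseteq> V"
    using neighbours_subset[OF s, of h] unfolding pendant_neighbours_def by auto
  ultimately show "card (pendant_neighbours V E h) = 2 * D + 1 - n"
    using card_image[OF inj_on_subset[OF inj]] by metis
qed

lemma sum_charge_excess:
  assumes t: "is_tree V E" and c: "3 \<le> card V"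
  shows "0 \<le> (\<Sum>v\<in>V - {h}. charge_excess V E h v)"
    "(\<Sum>v\<in>V - {h}. charge_excess V E h v) = 0 \<longleftrightarrow> (\<forall>v\<in>V - {h}. degree E v \<le> 2)"
proof -
  have fin: "finite (V - {h})" using simple_graph_finite(1)[OF is_treeD(1)[OF t]] by simp
  show "0 \<le> (\<Sum>v\<in>V - {h}. charge_excess V E h v)"
    using charge_excess(1)[OF t c] by (intro sum_nonneg) auto
  have "(\<Sum>v\<in>V - {h}. charge_excess V E h v) = 0 \<longleftrightarrow> (\<forall>v\<in>V - {h}. charge_excess V E h v = 0)"
    using charge_excess(1)[OF t c] by (intro sum_nonneg_eq_0_iff[OF fin]) auto
  also have "\<dots> \<longleftrightarrow> (\<forall>v\<in>V - {h}. degree E v \<le> 2)" using charge_excess(2)[OF t c] by auto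
  finally show "(\<Sum>v\<in>V - {h}. charge_excess V E h v) = 0 \<longleftrightarrow> (\<forall>v\<in>V - {h}. degree E v \<le> 2)" .
qed

lemma sombor_lower_bound_spider:
  assumes t: "is_tree V E" and c: "card V = n" and h: "h \<in> V" and D: "degree E h = D"
    and D3: "3 \<le> D"
  shows "real D * sqrt ((real D)\<^sup>2 + 4) + sqrt 8 * (real n - 2 * real D - 1) + sqrt 5 * real D
      \<le> sombor V E"
    "sombor V E = real D * sqrt ((real D)\<^sup>2 + 4) + sqrt 8 * (real n - 2 * real D - 1)
      + sqrt 5 * real D \<longleftrightarrow> spider_long_legs V E D"
proof -
  note s = is_treeD(1)[OF t]
  have c3: "3 \<le> card V" using degree_less_card[OF s h] D D3 by simp
  define L where "L = card (pendant_neighbours V E h)"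
  define G where "G = (\<Sum>v\<in>V - {h}. charge_excess V E h v)"
  have eq: "sombor V E = real D * sqrt ((real D)\<^sup>2 + 4) + sqrt 8 * (real n - 2 * real D - 1)
      + sqrt 5 * real D + (real L * pendant_gain D + G)"
    using sombor_eq_charging[OF t c h D D3] unfolding L_def G_def by simp
  have g: "0 < pendant_gain D" by (rule pendant_gain_pos[OF D3])
  have G: "0 \<le> G" "G = 0 \<longleftrightarrow> (\<forall>v\<in>V - {h}. degree E v \<le> 2)"
    unfolding G_def by (rule sum_charge_excess[OF t c3])+
  have L: "L = 0 \<longleftrightarrow> pendant_neighbours V E h = {}"
    unfolding L_def pendant_neighbours_def using finite_neighbours[OF s] by simp
  have "0 \<le> real L * pendant_gain D" using g by simp
  then show "real D * sqrt ((real D)\<^sup>2 + 4) + sqrt 8 * (real n - 2 * real D - 1) + sqrt 5 * real D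
      \<le> sombor V E"
    using eq G(1) by simp
  have "real L * pendant_gain D + G = 0 \<longleftrightarrow> L = 0 \<and> G = 0"
    using add_nonneg_eq_0_iff[OF \<open>0 \<le> real L * pendant_gain D\<close> G(1)] g by simp
  also have "\<dots> \<longleftrightarrow> spider_long_legs V E D" using spider_long_legs_iff[OF t h D D3] G(2) L by simp
  finally show "sombor V E = real D * sqrt ((real D)\<^sup>2 + 4) + sqrt 8 * (real n - 2 * real D - 1)
      + sqrt 5 * real D \<longleftrightarrow> spider_long_legs V E D"
    using eq by linarith
qed

lemma sombor_lower_bound_T_nD:
  assumes t: "is_tree V E" and c: "card V = n" and h: "h \<in> V" and D: "degree E h = D"
    and D3: "3 \<le> D" and n: "n \<le> 2 * D + 1"
  shows "(real n - real D - 1) * sqrt ((real D)\<^sup>2 + 4) + (2 * real D - real n + 1) * sqrt ((real D)\<^sup>2 + 1)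
      + sqrt 5 * (real n - real D - 1) \<le> sombor V E"
    "sombor V E = (real n - real D - 1) * sqrt ((real D)\<^sup>2 + 4)
      + (2 * real D - real n + 1) * sqrt ((real D)\<^sup>2 + 1) + sqrt 5 * (real n - real D - 1)
      \<longleftrightarrow> graph_iso V E (T_nD_V n D) (T_nD_E n D)"
proof -
  note s = is_treeD(1)[OF t]
  have Dn: "D < n" using degree_less_card[OF s h] D c by simp
  have c3: "3 \<le> card V" using Dn D3 c by simp
  define L where "L = card (pendant_neighbours V E h)"
  define G where "G = (\<Sum>v\<in>V - {h}. charge_excess V E h v)"
  define m where "m = 2 * D + 1 - n"
  have eq: "sombor V E = (real n - real D - 1) * sqrt ((real D)\<^sup>2 + 4)
      + (2 * real D - real n + 1) * sqrt ((real D)\<^sup>2 + 1) + sqrt 5 * (real n - real D - 1)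
      + ((real L - real m) * pendant_gain D + G)"
    using sombor_eq_charging[OF t c h D D3] n unfolding L_def G_def m_def pendant_gain_def sqrt_8
    by (simp add: of_nat_diff algebra_simps)
  have "m \<le> L" using card_pendant_neighbours_ge[OF t c3 h] c D Dn unfolding L_def m_def by linarith
  then have nonneg: "0 \<le> (real L - real m) * pendant_gain D" using pendant_gain_pos[OF D3] by simp
  have G: "0 \<le> G" "G = 0 \<longleftrightarrow> (\<forall>v\<in>V - {h}. degree E v \<le> 2)"
    unfolding G_def by (rule sum_charge_excess[OF t c3])+
  show "(real n - real D - 1) * sqrt ((real D)\<^sup>2 + 4)
      + (2 * real D - real n + 1) * sqrt ((real D)\<^sup>2 + 1) + sqrt 5 * (real n - real D - 1)
      \<le> sombor V E"
    using eq nonneg G(1) by simp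
  have "(real L - real m) * pendant_gain D + G = 0 \<longleftrightarrow> L = m \<and> G = 0"
    using add_nonneg_eq_0_iff[OF nonneg G(1)] pendant_gain_pos[OF D3] by simp
  also have "\<dots> \<longleftrightarrow> graph_iso V E (T_nD_V n D) (T_nD_E n D)"
    using graph_iso_T_nD[OF t c h D D3 n] graph_iso_T_nD_structure[OF s _ h D D3 Dn n] G(2)
    unfolding L_def m_def by blast
  finally show "sombor V E = (real n - real D - 1) * sqrt ((real D)\<^sup>2 + 4)
      + (2 * real D - real n + 1) * sqrt ((real D)\<^sup>2 + 1) + sqrt 5 * (real n - real D - 1)
      \<longleftrightarrow> graph_iso V E (T_nD_V n D) (T_nD_E n D)"
    using eq by linarith
qed

theorem theorem1p1:
  fixes V :: "'a set" and E :: "'a set set" and n D :: nat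
  assumes "is_tree V E" and "card V = n" and "n \<ge> 7"
    and "3 \<le> D" and "D \<le> n - 2" and "max_degree V E = D"
  shows "(D \<le> (n - 1) div 2 \<longrightarrow>
            sombor V E \<ge> real D * sqrt ((real D)\<^sup>2 + 4) + sqrt 8 * (real n - 2 * real D - 1)
                          + sqrt 5 * real D
          \<and> (sombor V E = real D * sqrt ((real D)\<^sup>2 + 4) + sqrt 8 * (real n - 2 * real D - 1)
                          + sqrt 5 * real D
               \<longleftrightarrow> spider_long_legs V E D))
       \<and> ((n - 1) div 2 < D \<longrightarrow>
            sombor V E \<ge> (real n - real D - 1) * sqrt ((real D)\<^sup>2 + 4)
                          + (2 * real D - real n + 1) * sqrt ((real D)\<^sup>2 + 1)
                          + sqrt 5 * (real n - real D - 1)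
          \<and> (sombor V E = (real n - real D - 1) * sqrt ((real D)\<^sup>2 + 4)
                          + (2 * real D - real n + 1) * sqrt ((real D)\<^sup>2 + 1)
                          + sqrt 5 * (real n - real D - 1)
               \<longleftrightarrow> graph_iso V E (T_nD_V n D) (T_nD_E n D)))"
proof -
  have "finite V" "V \<noteq> {}"
    using assms(1) simple_graph_finite(1)[OF is_treeD(1)] unfolding is_tree_def by auto
  then have "D \<in> degree E ` V"
    using Max_in[of "degree E ` V"] assms(6) unfolding max_degree_def by simp
  then obtain h where h: "h \<in> V" "degree E h = D" by blast
  have "(n - 1) div 2 < D \<Longrightarrow> n \<le> 2 * D + 1" by linarith
  then show ?thesis
    using sombor_lower_bound_spider[OF assms(1,2) h assms(4)]
      sombor_lower_bound_T_nD[OF assms(1,2) h assms(4)]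
    by blast
qed

end
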